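(* For $k\in\mathbb N=\{1,2,\dots\}$ and $0<\alpha<1$, \[ \sum_{j=0}^k \binom{\alpha k}{\alpha j} x^{\alpha j}y^{\alpha(k-j)}\ge (x+y)^{\alpha k},\qquad x,y\ge 0, \] and for $k\in\mathbb N$ and $\alpha>1$, \[ \sum_{j=0}^k \binom{\alpha k}{\alpha j} x^{\alpha j}y^{\alpha(k-j)}\le (x+y)^{\alpha k},\qquad x,y\ge 0. \] Both inequalities are strict whenever $x>0$ and $y>0$.
   Context: For real $a\ge b\ge 0$, the generalized binomial coefficient is $\binom{a}{b}=\frac{\Gamma(a+1)}{\Gamma(b+1)\Gamma(a-b+1)}$. *)

theory Defs
  imports "HOL-Analysis.Analysis"
begin

definition gen_binom :: "real \<Rightarrow> real \<Rightarrow> real" where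
  "gen_binom a b = Gamma (a + 1) / (Gamma (b + 1) * Gamma (a - b + 1))"

text \<open>Real power with the convention t^0 = 1 (Isabelle's powr has 0 powr 0 = 0).\<close>
definition rpow :: "real \<Rightarrow> real \<Rightarrow> real" where
  "rpow t a = (if a = 0 then 1 else t powr a)"

end

theory Submission
  imports Defs
begin

text \<open>
  Put \<open>F\<^sub>k(x) = \<Sum>\<^sub>j x^(aj) y^(a(k-j)) / (\<Gamma>(aj+1) \<Gamma>(a(k-j)+1))\<close> and
  \<open>H\<^sub>k(x) = (x+y)^(ak) / \<Gamma>(ak+1)\<close>, so that the two sides of the inequality are
  \<open>\<Gamma>(ak+1) F\<^sub>k(x)\<close> and \<open>\<Gamma>(ak+1) H\<^sub>k(x)\<close>. The Riemann--Liouville integral \<open>I\<^sup>a\<close>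
  (in the variable \<open>x\<close>) maps \<open>x^c / \<Gamma>(c+1)\<close> to \<open>x^(c+a) / \<Gamma>(c+a+1)\<close>, whence
  \<open>F\<^sub>k\<^sub>+\<^sub>1 = y^(a(k+1)) / \<Gamma>(a(k+1)+1) + I\<^sup>a F\<^sub>k\<close>. The family \<open>H\<^sub>k\<close> satisfies the
  same recursion only up to an error term, a difference of Beta-type integrals whose sign is that
  of \<open>1 - a\<close>. As \<open>I\<^sup>a\<close> is monotone, induction on \<open>k\<close> yields
  \<open>sgn(1 - a) (F\<^sub>k - H\<^sub>k) > 0\<close> for \<open>x, y > 0\<close>. If \<open>x = 0\<close> or \<open>y = 0\<close>, both sides
  reduce to a single term and coincide.
\<close>

lemma has_integral_Beta_scaled:
  fixes p q L :: real
  assumes p: "p > 0" and q: "q > 0" and L: "L > 0"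
  shows "((\<lambda>u. u powr (p - 1) * (L - u) powr (q - 1)) has_integral L powr (p + q - 1) * Beta p q) {0..L}"
proof -
  define f where "f t = t powr (p - 1) * (1 - t) powr (q - 1)" for t :: real
  have "((\<lambda>u. f (inverse L * u + 0)) has_integral Beta p q / inverse L) {0..L}"
    using has_integral_affinity'[of f "Beta p q" 0 1 "inverse L" 0] has_integral_Beta_real[OF p q, folded f_def] L
    by (simp add: divide_inverse mult.commute)
  then have "((\<lambda>u. L powr (p + q - 2) * f (u / L)) has_integral L powr (p + q - 2) * (Beta p q * L)) {0..L}"
    by (intro has_integral_mult_right) (simp add: divide_inverse mult.commute)
  moreover have "L powr (p + q - 2) * f (u / L) = u powr (p - 1) * (L - u) powr (q - 1)"
    if "u \<in> {0..L}" for u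
  proof -
    have "1 - u / L = (L - u) / L" using L by (simp add: field_simps)
    then have "f (u / L) = u powr (p - 1) * (L - u) powr (q - 1) / (L powr (p - 1) * L powr (q - 1))"
      using that L by (simp add: f_def powr_divide)
    moreover have "L powr (p + q - 2) = L powr (p - 1) * L powr (q - 1)"
      by (simp add: powr_add[symmetric] algebra_simps)
    ultimately show ?thesis using L by simp
  qed
  moreover have "L powr (p + q - 2) * (Beta p q * L) = L powr (p + q - 1) * Beta p q"
    using powr_add[of L "p + q - 2" 1] L by simp
  ultimately show ?thesis by (metis (no_types, lifting) has_integral_eq)
qed

lemma has_integral_less:
  fixes f g :: "real \<Rightarrow> real"
  assumes f: "(f has_integral I) {a..b}" and g: "(g has_integral J) {a..b}"
    and cd: "a < c" "c < d" "d < b"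
    and cont: "continuous_on {c..d} f" "continuous_on {c..d} g"
    and less: "\<And>u. a < u \<Longrightarrow> u < b \<Longrightarrow> f u < g u"
  shows "I < J"
proof -
  have diff: "((\<lambda>u. g u - f u) has_integral J - I) {a<..<b}"
    using has_integral_diff[OF g f] by (simp add: has_integral_Icc_iff_Ioo)
  have cont_diff: "continuous_on {c..d} (\<lambda>u. g u - f u)"
    using cont by (intro continuous_intros)
  then obtain W where W: "((\<lambda>u. g u - f u) has_integral W) {c..d}"
    using integrable_continuous_real by blast
  have inner_pos: "0 < g u - f u" if "c < u" "u < d" for u
    using less[of u] that cd by simp
  have "W \<le> J - I"
    using has_integral_subset_le[OF _ W diff] cd less by (force simp: less_imp_le)
  moreover have "W \<noteq> 0"
  proof
    assume "W = 0"
    then have "g ((c + d) / 2) - f ((c + d) / 2) = 0"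
      using has_integral_0_cbox_imp_0[of c d "\<lambda>u. g u - f u" "(c + d) / 2"] cont_diff W cd inner_pos
      by (auto simp: less_imp_le)
    with inner_pos[of "(c + d) / 2"] cd show False by simp
  qed
  moreover have "W \<ge> 0"
    by (rule has_integral_nonneg[OF W]) (use cd less in \<open>auto simp: less_imp_le\<close>)
  ultimately show ?thesis by simp
qed

lemma has_integral_shifted_Beta_kernel:
  fixes a c x y :: real
  assumes a: "a > 0" and c: "c > -1" and x: "x > 0" and y: "y \<ge> 0"
  shows "((\<lambda>s. (x - s) powr (a - 1) * (s + y) powr c) has_integral
           (x + y) powr (c + a) * Beta (c + 1) a
             - integral {0..y} (\<lambda>u. u powr c * (x + y - u) powr (a - 1))) {0..x}"
proof -
  define L where "L = x + y"
  define K where "K u = u powr c * (L - u) powr (a - 1)" for u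
  have K: "(K has_integral L powr (c + a) * Beta (c + 1) a) {0..L}"
    unfolding K_def L_def using has_integral_Beta_scaled[of "c + 1" a "x + y"] a c x y by simp
  then have "K integrable_on {0..L}" by blast
  then have "K integrable_on {0..y}" "K integrable_on {y..L}"
    using x y by (auto simp: L_def elim!: integrable_subinterval_real)
  then have "(K has_integral integral {0..y} K) {0..y}" "(K has_integral integral {y..L} K) {y..L}"
    by (simp_all add: integrable_integral)
  moreover have "integral {0..y} K + integral {y..L} K = L powr (c + a) * Beta (c + 1) a"
    using has_integral_combine[OF _ _ calculation] K x y has_integral_unique by (simp add: L_def)
  ultimately have "(K has_integral L powr (c + a) * Beta (c + 1) a - integral {0..y} K) {y..L}"
    by (metis add_diff_cancel_left')
  from has_integral_shift_real_ivl[OF this, of y]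
  have "((\<lambda>s. K (s + y)) has_integral L powr (c + a) * Beta (c + 1) a - integral {0..y} K) {0..x}"
    by (simp add: L_def)
  then show ?thesis
    unfolding K_def L_def by (simp add: mult.commute)
qed

definition divided_powr :: "real \<Rightarrow> real \<Rightarrow> real" where
  "divided_powr c z = z powr c / Gamma (c + 1)"

definition frac_integral :: "real \<Rightarrow> (real \<Rightarrow> real) \<Rightarrow> real \<Rightarrow> real" where
  "frac_integral a f x = integral {0..x} (\<lambda>s. (x - s) powr (a - 1) * f s) / Gamma a"

definition frac_binom_sum :: "real \<Rightarrow> nat \<Rightarrow> real \<Rightarrow> real \<Rightarrow> real" where
  "frac_binom_sum a k x y = (\<Sum>j=0..k. divided_powr (a * real j) x * divided_powr (a * real (k - j)) y)"

lemma divided_powr_0: "z \<noteq> 0 \<Longrightarrow> divided_powr 0 z = 1"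
  by (simp add: divided_powr_def)

lemma divided_powr_eq_Beta:
  assumes "a > 0" "c > -1"
  shows "divided_powr (c + a) z = z powr (c + a) * Beta (c + 1) a / (Gamma a * Gamma (c + 1))"
proof -
  have "Gamma a > 0" "Gamma (c + 1) > 0" using assms by (auto intro: Gamma_real_pos)
  then show ?thesis by (simp add: divided_powr_def Beta_def add_ac)
qed

lemma has_integral_frac_kernel_divided_powr:
  assumes a: "a > 0" and c: "c > -1" and x: "x > 0"
  shows "((\<lambda>s. (x - s) powr (a - 1) * divided_powr c s) has_integral Gamma a * divided_powr (c + a) x) {0..x}"
proof -
  have "((\<lambda>s. s powr c * (x - s) powr (a - 1) / Gamma (c + 1)) has_integral
          x powr (c + a) * Beta (c + 1) a / Gamma (c + 1)) {0..x}"
    using has_integral_Beta_scaled[of "c + 1" a x] a c x by (intro has_integral_divide) simp_all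
  moreover have "Gamma a > 0" using a by (rule Gamma_real_pos)
  ultimately show ?thesis
    using divided_powr_eq_Beta[OF a c] by (simp add: divided_powr_def field_simps)
qed

lemma has_integral_frac_kernel_binom_sum:
  assumes a: "a > 0" and x: "x > 0"
  shows "((\<lambda>s. (x - s) powr (a - 1) * frac_binom_sum a k s y) has_integral
           Gamma a * (frac_binom_sum a (Suc k) x y - divided_powr (a * real (Suc k)) y)) {0..x}"
proof -
  have "((\<lambda>s. \<Sum>j=0..k. divided_powr (a * real (k - j)) y * ((x - s) powr (a - 1) * divided_powr (a * real j) s))
          has_integral (\<Sum>j=0..k. divided_powr (a * real (k - j)) y * (Gamma a * divided_powr (a * real j + a) x))) {0..x}"
    using a x by (intro has_integral_sum has_integral_mult_right has_integral_frac_kernel_divided_powr)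
      (auto intro: less_le_trans[of "-1" 0])
  moreover have "(\<Sum>j=0..k. divided_powr (a * real (k - j)) y * (Gamma a * divided_powr (a * real j + a) x))
      = Gamma a * (\<Sum>j=0..k. divided_powr (a * real (Suc j)) x * divided_powr (a * real (Suc k - Suc j)) y)"
    by (simp add: sum_distrib_left algebra_simps)
  moreover have "frac_binom_sum a (Suc k) x y = divided_powr (a * real (Suc k)) y
      + (\<Sum>j=0..k. divided_powr (a * real (Suc j)) x * divided_powr (a * real (Suc k - Suc j)) y)"
    unfolding frac_binom_sum_def using x by (subst sum.atLeast0_atMost_Suc_shift) (simp add: divided_powr_0)
  ultimately show ?thesis
    unfolding frac_binom_sum_def by (simp add: sum_distrib_left mult_ac)
qed

lemma frac_binom_sum_Suc:
  assumes "a > 0" and "x > 0"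
  shows "frac_binom_sum a (Suc k) x y
           = divided_powr (a * real (Suc k)) y + frac_integral a (\<lambda>s. frac_binom_sum a k s y) x"
proof -
  have "Gamma a > 0" using assms(1) by (rule Gamma_real_pos)
  then show ?thesis
    using integral_unique[OF has_integral_frac_kernel_binom_sum[OF assms, of k y]]
    by (simp add: frac_integral_def)
qed

lemma frac_integral_mono:
  assumes a: "a > 0"
    and f: "(\<lambda>s. (x - s) powr (a - 1) * f s) integrable_on {0..x}"
    and g: "(\<lambda>s. (x - s) powr (a - 1) * g s) integrable_on {0..x}"
    and le: "\<And>s. 0 < s \<Longrightarrow> s < x \<Longrightarrow> f s \<le> g s"
  shows "frac_integral a f x \<le> frac_integral a g x"
proof -
  have "((\<lambda>s. (x - s) powr (a - 1) * f s) has_integral integral {0..x} (\<lambda>s. (x - s) powr (a - 1) * f s)) {0<..<x}"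
       "((\<lambda>s. (x - s) powr (a - 1) * g s) has_integral integral {0..x} (\<lambda>s. (x - s) powr (a - 1) * g s)) {0<..<x}"
    using f g by (simp_all add: has_integral_Icc_iff_Ioo[symmetric] integrable_integral)
  then have "integral {0..x} (\<lambda>s. (x - s) powr (a - 1) * f s) \<le> integral {0..x} (\<lambda>s. (x - s) powr (a - 1) * g s)"
    by (rule has_integral_le) (simp add: le mult_left_mono)
  moreover have "Gamma a > 0" using a by (rule Gamma_real_pos)
  ultimately show ?thesis by (simp add: frac_integral_def divide_right_mono)
qed

lemma frac_kernel_shifted_divided_powr_integrable:
  assumes "a > 0" "c > -1" "x > 0" "y \<ge> 0"
  shows "(\<lambda>s. (x - s) powr (a - 1) * divided_powr c (s + y)) integrable_on {0..x}"
  using integrable_on_divide[OF has_integral_integrable[OF has_integral_shifted_Beta_kernel[OF assms]],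
      of "Gamma (c + 1)"]
  by (simp add: divided_powr_def)

text \<open>
  Up to the factor \<open>\<Gamma>(a) \<Gamma>(c+1)\<close>, the quantity below equals
  \<open>\<integral>\<^sub>0\<^sup>y u^c ((y-u)^(a-1) - (x+y-u)^(a-1)) du\<close>.
\<close>

lemma sgn_frac_integral_shifted_divided_powr:
  assumes a: "a > 0" "a \<noteq> 1" and c: "c > -1" and x: "x > 0" and y: "y > 0"
  shows "0 < sgn (1 - a) * (divided_powr (c + a) y + frac_integral a (\<lambda>s. divided_powr c (s + y)) x
                             - divided_powr (c + a) (x + y))"
proof -
  define L where "L = x + y"
  define K where "K z u = u powr c * (z - u) powr (a - 1)" for z u :: real
  define B where "B = Beta (c + 1) a"
  define G where "G = Gamma a * Gamma (c + 1)"
  have G: "G > 0" using a c by (auto simp: G_def intro!: Gamma_real_pos)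
  have Ky: "(K y has_integral y powr (c + a) * B) {0..y}"
    unfolding K_def B_def using has_integral_Beta_scaled[of "c + 1" a y] a c y by simp
  have "(K L has_integral L powr (c + a) * B) {0..L}"
    unfolding K_def B_def using has_integral_Beta_scaled[of "c + 1" a L] a c x y by (simp add: L_def)
  then have "K L integrable_on {0..y}"
    by (rule integrable_subinterval_real[OF has_integral_integrable]) (use x in \<open>simp add: L_def\<close>)
  then have KL: "(K L has_integral integral {0..y} (K L)) {0..y}"
    by (rule integrable_integral)
  have "integral {0..x} (\<lambda>s. (x - s) powr (a - 1) * (s + y) powr c) = L powr (c + a) * B - integral {0..y} (K L)"
    unfolding K_def L_def B_def
    by (rule integral_unique[OF has_integral_shifted_Beta_kernel[OF a(1) c x less_imp_le[OF y]]])
  then have "frac_integral a (\<lambda>s. divided_powr c (s + y)) x = (L powr (c + a) * B - integral {0..y} (K L)) / G"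
    by (simp add: frac_integral_def divided_powr_def G_def mult.commute)
  then have eq: "divided_powr (c + a) y + frac_integral a (\<lambda>s. divided_powr c (s + y)) x - divided_powr (c + a) (x + y)
      = (y powr (c + a) * B - integral {0..y} (K L)) / G"
    using divided_powr_eq_Beta[OF a(1) c] by (simp add: L_def B_def G_def diff_divide_distrib add_divide_distrib)
  have cont: "continuous_on {y/4..y/2} (K z)" if "z \<ge> y" for z
    using y that unfolding K_def by (intro continuous_intros) auto
  have L: "L > y" using x by (simp add: L_def)
  show ?thesis
  proof (cases "a < 1")
    case True
    have "integral {0..y} (K L) < y powr (c + a) * B"
    proof (rule has_integral_less[OF KL Ky _ _ _ cont cont])
      fix u assume "0 < u" "u < y"
      then show "K L u < K y u"
        using True L by (simp add: K_def powr_less_mono2_neg)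
    qed (use y L in auto)
    with True G show ?thesis by (simp add: eq)
  next
    case False
    with a have "a > 1" by simp
    have "y powr (c + a) * B < integral {0..y} (K L)"
    proof (rule has_integral_less[OF Ky KL _ _ _ cont cont])
      fix u assume "0 < u" "u < y"
      then show "K y u < K L u"
        using \<open>a > 1\<close> L by (simp add: K_def powr_less_mono2)
    qed (use y L in auto)
    with \<open>a > 1\<close> G show ?thesis by (simp add: eq divide_less_0_iff)
  qed
qed

lemma sgn_frac_binom_sum_Suc:
  assumes a: "a > 0" "a \<noteq> 1" and x: "x > 0" and y: "y > 0"
    and IH: "\<And>s. s > 0 \<Longrightarrow> 0 \<le> sgn (1 - a) * (frac_binom_sum a k s y - divided_powr (a * real k) (s + y))"
  shows "0 < sgn (1 - a) * (frac_binom_sum a (Suc k) x y - divided_powr (a * real (Suc k)) (x + y))"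
proof -
  define c where "c = a * real k"
  define \<sigma> :: real where "\<sigma> = sgn (1 - a)"
  have c: "c > -1" using a by (simp add: c_def less_le_trans[of "-1" 0])
  have Suc: "a * real (Suc k) = c + a" by (simp add: c_def algebra_simps)
  have F: "(\<lambda>s. (x - s) powr (a - 1) * frac_binom_sum a k s y) integrable_on {0..x}"
    using has_integral_frac_kernel_binom_sum[OF a(1) x] by blast
  have H: "(\<lambda>s. (x - s) powr (a - 1) * divided_powr c (s + y)) integrable_on {0..x}"
    using frac_kernel_shifted_divided_powr_integrable[OF a(1) c x less_imp_le[OF y]] .
  have "0 \<le> \<sigma> * (frac_integral a (\<lambda>s. frac_binom_sum a k s y) x - frac_integral a (\<lambda>s. divided_powr c (s + y)) x)"
  proof (cases "a < 1")
    case True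
    then have "frac_integral a (\<lambda>s. divided_powr c (s + y)) x \<le> frac_integral a (\<lambda>s. frac_binom_sum a k s y) x"
      using IH by (intro frac_integral_mono[OF a(1) H F]) (simp add: c_def)
    with True show ?thesis by (simp add: \<sigma>_def)
  next
    case False
    with a have "a > 1" by simp
    then have "frac_integral a (\<lambda>s. frac_binom_sum a k s y) x \<le> frac_integral a (\<lambda>s. divided_powr c (s + y)) x"
      using IH by (intro frac_integral_mono[OF a(1) F H]) (simp add: c_def)
    with \<open>a > 1\<close> show ?thesis by (simp add: \<sigma>_def)
  qed
  moreover have "0 < \<sigma> * (divided_powr (c + a) y + frac_integral a (\<lambda>s. divided_powr c (s + y)) x
                               - divided_powr (c + a) (x + y))"
    unfolding \<sigma>_def by (rule sgn_frac_integral_shifted_divided_powr[OF a c x y])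
  moreover have "frac_binom_sum a (Suc k) x y
      = divided_powr (c + a) y + frac_integral a (\<lambda>s. frac_binom_sum a k s y) x"
    using frac_binom_sum_Suc[OF a(1) x, of k y] by (simp only: Suc)
  ultimately show ?thesis
    unfolding Suc \<sigma>_def[symmetric] by (simp add: algebra_simps)
qed

lemma sgn_frac_binom_sum:
  assumes a: "a > 0" "a \<noteq> 1" and k: "k \<ge> 1" and x: "x > 0" and y: "y > 0"
  shows "0 < sgn (1 - a) * (frac_binom_sum a k x y - divided_powr (a * real k) (x + y))"
proof -
  have nonneg: "0 \<le> sgn (1 - a) * (frac_binom_sum a m s y - divided_powr (a * real m) (s + y))"
    if "s > 0" for m s
    using that
  proof (induction m arbitrary: s)
    case 0
    then show ?case using y by (simp add: frac_binom_sum_def divided_powr_0)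
  next
    case (Suc m)
    then show ?case using sgn_frac_binom_sum_Suc[OF a _ y] by (simp add: less_imp_le)
  qed
  obtain m where "k = Suc m" using k by (cases k) auto
  then show ?thesis using sgn_frac_binom_sum_Suc[OF a x y nonneg] by simp
qed

lemma rpow_pos: "t > 0 \<Longrightarrow> rpow t c = t powr c"
  by (simp add: rpow_def)

lemma Gamma_plus_one_pos: "c \<ge> 0 \<Longrightarrow> Gamma (c + 1) > (0 :: real)"
  by (simp add: Gamma_real_pos)

lemma gen_binom_sum_eq_frac_binom_sum:
  fixes k :: nat and a x y :: real
  assumes "x > 0" "y > 0"
  shows "(\<Sum>j=0..k. gen_binom (a * k) (a * j) * rpow x (a * j) * rpow y (a * (k - j)))
           = Gamma (a * k + 1) * frac_binom_sum a k x y"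
  unfolding frac_binom_sum_def sum_distrib_left
proof (intro sum.cong refl)
  fix j assume "j \<in> {0..k}"
  then have "a * real k - a * real j = a * real (k - j)" by (simp add: of_nat_diff algebra_simps)
  then show "gen_binom (a * k) (a * j) * rpow x (a * j) * rpow y (a * (k - j))
      = Gamma (a * k + 1) * (divided_powr (a * real j) x * divided_powr (a * real (k - j)) y)"
    using assms by (simp add: gen_binom_def divided_powr_def rpow_pos)
qed

lemma gen_binom_sum_degenerate:
  fixes k :: nat and a x y :: real
  assumes a: "a > 0" and xy: "x \<ge> 0" "y \<ge> 0" "x = 0 \<or> y = 0"
  shows "(\<Sum>j=0..k. gen_binom (a * k) (a * j) * rpow x (a * j) * rpow y (a * (k - j)))
           = rpow (x + y) (a * k)"
proof -
  have \<Gamma>: "Gamma (a * real k + 1) > 0" using a by (simp add: Gamma_plus_one_pos)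
  consider "x = 0" | "y = 0" "x > 0" using xy by linarith
  then show ?thesis
  proof cases
    case 1
    then have "(\<Sum>j=0..k. gen_binom (a * k) (a * j) * rpow x (a * j) * rpow y (a * (k - j)))
        = (\<Sum>j\<in>{0}. gen_binom (a * k) (a * j) * rpow x (a * j) * rpow y (a * (k - j)))"
      using a by (intro sum.mono_neutral_right) (auto simp: rpow_def)
    with 1 \<Gamma> show ?thesis by (simp add: gen_binom_def rpow_def)
  next
    case 2
    then have "(\<Sum>j=0..k. gen_binom (a * k) (a * j) * rpow x (a * j) * rpow y (a * (k - j)))
        = (\<Sum>j\<in>{k}. gen_binom (a * k) (a * j) * rpow x (a * j) * rpow y (a * (k - j)))"
      using a by (intro sum.mono_neutral_right) (auto simp: rpow_def)
    with 2 \<Gamma> show ?thesis by (simp add: gen_binom_def rpow_def)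
  qed
qed

theorem theorem1p3:
  fixes k :: nat and \<alpha> x y :: real
  assumes "k \<ge> 1" and "x \<ge> 0" and "y \<ge> 0"
  shows "(0 < \<alpha> \<and> \<alpha> < 1 \<longrightarrow>
           (\<Sum>j=0..k. gen_binom (\<alpha> * k) (\<alpha> * j) * rpow x (\<alpha> * j) * rpow y (\<alpha> * (k - j)))
             \<ge> rpow (x + y) (\<alpha> * k))
       \<and> (0 < \<alpha> \<and> \<alpha> < 1 \<and> x > 0 \<and> y > 0 \<longrightarrow>
           (\<Sum>j=0..k. gen_binom (\<alpha> * k) (\<alpha> * j) * rpow x (\<alpha> * j) * rpow y (\<alpha> * (k - j)))
             > rpow (x + y) (\<alpha> * k))
       \<and> (\<alpha> > 1 \<longrightarrow>
           (\<Sum>j=0..k. gen_binom (\<alpha> * k) (\<alpha> * j) * rpow x (\<alpha> * j) * rpow y (\<alpha> * (k - j)))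
             \<le> rpow (x + y) (\<alpha> * k))
       \<and> (\<alpha> > 1 \<and> x > 0 \<and> y > 0 \<longrightarrow>
           (\<Sum>j=0..k. gen_binom (\<alpha> * k) (\<alpha> * j) * rpow x (\<alpha> * j) * rpow y (\<alpha> * (k - j)))
             < rpow (x + y) (\<alpha> * k))"
proof -
  define S where "S = (\<Sum>j=0..k. gen_binom (\<alpha> * k) (\<alpha> * j) * rpow x (\<alpha> * j) * rpow y (\<alpha> * (k - j)))"
  have strict: "0 < sgn (1 - \<alpha>) * (S - rpow (x + y) (\<alpha> * k))"
    if "\<alpha> > 0" "\<alpha> \<noteq> 1" "x > 0" "y > 0"
  proof -
    have \<Gamma>: "Gamma (\<alpha> * k + 1) > 0" using that by (simp add: Gamma_plus_one_pos)
    have "rpow (x + y) (\<alpha> * k) = Gamma (\<alpha> * k + 1) * divided_powr (\<alpha> * k) (x + y)"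
      using that \<Gamma> by (simp add: rpow_pos divided_powr_def)
    moreover have "S = Gamma (\<alpha> * k + 1) * frac_binom_sum \<alpha> k x y"
      unfolding S_def using gen_binom_sum_eq_frac_binom_sum[OF that(3,4)] .
    ultimately have "S - rpow (x + y) (\<alpha> * k)
        = Gamma (\<alpha> * k + 1) * (frac_binom_sum \<alpha> k x y - divided_powr (\<alpha> * k) (x + y))"
      by (simp add: right_diff_distrib)
    then show ?thesis
      using sgn_frac_binom_sum[OF that(1,2) assms(1) that(3,4)] \<Gamma> by (metis mult.left_commute mult_pos_pos)
  qed
  have degenerate: "S = rpow (x + y) (\<alpha> * k)" if "\<alpha> > 0" "x = 0 \<or> y = 0"
    unfolding S_def using gen_binom_sum_degenerate[OF that(1) assms(2,3) that(2)] .
  have "sgn (1 - \<alpha>) = 1" if "\<alpha> < 1" using that by simp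
  moreover have "sgn (1 - \<alpha>) = -1" if "\<alpha> > 1" using that by simp
  ultimately have "(0 < \<alpha> \<and> \<alpha> < 1 \<and> x > 0 \<and> y > 0 \<longrightarrow> S > rpow (x + y) (\<alpha> * k))
      \<and> (\<alpha> > 1 \<and> x > 0 \<and> y > 0 \<longrightarrow> S < rpow (x + y) (\<alpha> * k))"
    using strict by fastforce
  moreover have "x = 0 \<or> y = 0 \<or> x > 0 \<and> y > 0" using assms(2,3) by linarith
  ultimately show ?thesis
    unfolding S_def[symmetric] using degenerate by fastforce
qed

end
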